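(* Let $P,Q$ be probability distributions on a finite set $\mathcal{X}$, $\delta\in(0,1)$, and assume $\sum_x\min\{P(x),Q(x)\}<1-\delta$. Let $\lambda_P$ be such that $\tilde P(x) := \min\{P(x),\lambda_P Q(x)\}$ satisfies $\sum_x\tilde P(x) = 1-\delta$, and let $\lambda_Q$ be such that $\tilde Q(x) := \min\{Q(x),\tilde P(x)/\lambda_Q\}$ satisfies $\sum_x\tilde Q(x)=1-\delta$. Then $\lambda_P\ge1\ge\lambda_Q$, and for every $\alpha>1$, the pair $(P',Q') = (\tilde P/(1-\delta),\tilde Q/(1-\delta))$ attains the infimum defining the approximate Rényi divergence, i.e. $$D^\delta_\alpha(P\|Q) = D_\alpha\!\left(\tfrac{\tilde P}{1-\delta}\,\Big\|\,\tfrac{\tilde Q}{1-\delta}\right).$$ In particular the minimizing pair does not depend on $\alpha$.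
   Context: For $\alpha>1$, $D_\alpha(P\|Q)=\frac{1}{\alpha-1}\log\sum_x P(x)^\alpha Q(x)^{1-\alpha}$ (infinite if $P$ is not absolutely continuous w.r.t. $Q$), and $D^\delta_\alpha(P\|Q)=\inf\{D_\alpha(P'\|Q'): P=(1-\delta)P'+\delta P'',\ Q=(1-\delta)Q'+\delta Q''\}$ over probability distributions $P',P'',Q',Q''$, equivalently over distributions $P',Q'$ with $P'\le P/(1-\delta)$ and $Q'\le Q/(1-\delta)$ pointwise. *)

theory Defs
  imports "HOL-Analysis.Analysis"
begin

definition is_dist :: "('a::finite \<Rightarrow> real) \<Rightarrow> bool" where
  "is_dist P \<longleftrightarrow> (\<forall>x. P x \<ge> 0) \<and> (\<Sum>x\<in>UNIV. P x) = 1"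

definition renyi_div :: "real \<Rightarrow> ('a::finite \<Rightarrow> real) \<Rightarrow> ('a \<Rightarrow> real) \<Rightarrow> ereal" where
  "renyi_div \<alpha> P Q =
     (if (\<forall>x. Q x = 0 \<longrightarrow> P x = 0)
      then ereal (ln (\<Sum>x\<in>UNIV. P x powr \<alpha> * Q x powr (1 - \<alpha>)) / (\<alpha> - 1))
      else \<infinity>)"

definition approx_feasible :: "real \<Rightarrow> ('a::finite \<Rightarrow> real) \<Rightarrow> ('a \<Rightarrow> real)
     \<Rightarrow> ('a \<Rightarrow> real) \<Rightarrow> ('a \<Rightarrow> real) \<Rightarrow> bool" where
  "approx_feasible \<delta> P Q P' Q' \<longleftrightarrow>
     (\<exists>P'' Q''. is_dist P' \<and> is_dist P'' \<and> is_dist Q' \<and> is_dist Q'' \<and>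
        (\<forall>x. P x = (1 - \<delta>) * P' x + \<delta> * P'' x) \<and>
        (\<forall>x. Q x = (1 - \<delta>) * Q' x + \<delta> * Q'' x))"

definition approx_renyi_div :: "real \<Rightarrow> real \<Rightarrow> ('a::finite \<Rightarrow> real) \<Rightarrow> ('a \<Rightarrow> real) \<Rightarrow> ereal" where
  "approx_renyi_div \<alpha> \<delta> P Q =
     (INF PQ \<in> {(P', Q'). approx_feasible \<delta> P Q P' Q'}. renyi_div \<alpha> (fst PQ) (snd PQ))"

end

theory Submission
  imports Defs
begin

text \<open>
  The objective \<Sum>x. P' x powr \<alpha> * Q' x powr (1 - \<alpha>) is a sum of the convex, positively
  homogeneous functions f(p, q) = p powr \<alpha> * q powr (1 - \<alpha>), whose tangent plane along the
  ray p = r q is \<alpha> r powr (\<alpha> - 1) p + (1 - \<alpha>) r powr \<alpha> q. The feasible pairs are the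
  distributions with (1 - \<delta>) P' \<le> P and (1 - \<delta>) Q' \<le> Q. At the candidate the ratio
  r x = Ptilde x / Qtilde x lies in [lamQ, lamP]; it equals lamP wherever Ptilde x < P x, the
  only places where P' may exceed the candidate, and it equals lamQ wherever Qtilde x < Q x,
  the only places where Q' may exceed it. So the tangent slopes are maximal exactly where mass
  can be added, and since all distributions have mass 1 the linearisation at the candidate
  cannot decrease. This first-order certificate does not depend on \<alpha>.
\<close>

lemma powr_above_tangent:
  fixes a r t :: real
  assumes "a \<ge> 1" "r > 0" "t > 0"
  shows "r powr a + a * r powr (a - 1) * (t - r) \<le> t powr a"
proof -
  have "((\<lambda>x. x powr a) has_real_derivative a * r powr (a - 1)) (at r within {0<..})"
    using assms by (auto intro!: derivative_eq_intros)
  then have "a * r powr (a - 1) * (t - r) \<le> t powr a - r powr a"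
    using assms by (intro convex_on_imp_above_tangent[OF powr_convex[OF assms(1)]])
      (auto simp: interior_open is_interval_connected is_interval_ci)
  then show ?thesis by simp
qed

lemma renyi_summand_above_tangent:
  fixes a p q r :: real
  assumes "a \<ge> 1" "r > 0" "p \<ge> 0" "q \<ge> 0" "q = 0 \<Longrightarrow> p = 0"
  shows "a * r powr (a - 1) * p + (1 - a) * r powr a * q \<le> p powr a * q powr (1 - a)"
proof -
  consider "q = 0" | "q > 0" "p = 0" | "q > 0" "p > 0"
    using assms by linarith
  then show ?thesis
  proof cases
    case 1
    then show ?thesis using assms by simp
  next
    case 2
    then show ?thesis using assms by (simp add: mult_nonpos_nonneg)
  next
    case 3
    have "r powr a = r * r powr (a - 1)"
      using assms by (simp add: powr_diff)
    then have "a * r powr (a - 1) * p + (1 - a) * r powr a * q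
             = q * (r powr a + a * r powr (a - 1) * (p / q - r))"
      using 3 by (simp add: field_simps)
    also have "\<dots> \<le> q * (p / q) powr a"
      using 3 assms by (intro mult_left_mono powr_above_tangent) auto
    also have "\<dots> = p powr a * q powr (1 - a)"
      using 3 by (simp add: powr_divide powr_diff field_simps)
    finally show ?thesis .
  qed
qed

lemma renyi_summand_on_ray:
  fixes a q r :: real
  assumes "r > 0" "q \<ge> 0"
  shows "(r * q) powr a * q powr (1 - a) = a * r powr (a - 1) * (r * q) + (1 - a) * r powr a * q"
proof (cases "q = 0")
  case False
  then have "(r * q) powr a * q powr (1 - a) = r powr a * q"
    using assms by (simp add: powr_mult powr_diff field_simps)
  moreover have "r powr a = r * r powr (a - 1)"
    using assms by (simp add: powr_diff)
  ultimately show ?thesis by (simp add: algebra_simps)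
qed simp

lemma renyi_sum_le_of_tangent_certificate:
  fixes p q p0 q0 r :: "'a \<Rightarrow> real" and a :: real
  assumes "finite A" "a \<ge> 1"
    and "\<And>x. x \<in> A \<Longrightarrow> r x > 0"
    and "\<And>x. x \<in> A \<Longrightarrow> q0 x \<ge> 0" "\<And>x. x \<in> A \<Longrightarrow> p0 x = r x * q0 x"
    and "\<And>x. x \<in> A \<Longrightarrow> p x \<ge> 0" "\<And>x. x \<in> A \<Longrightarrow> q x \<ge> 0"
    and "\<And>x. x \<in> A \<Longrightarrow> q x = 0 \<Longrightarrow> p x = 0"
    and "(\<Sum>x\<in>A. a * r x powr (a - 1) * (p x - p0 x) + (1 - a) * r x powr a * (q x - q0 x)) \<ge> 0"
  shows "(\<Sum>x\<in>A. p0 x powr a * q0 x powr (1 - a)) \<le> (\<Sum>x\<in>A. p x powr a * q x powr (1 - a))"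
proof -
  define tangent where
    "tangent f g = (\<Sum>x\<in>A. a * r x powr (a - 1) * f x + (1 - a) * r x powr a * g x)"
    for f g :: "'a \<Rightarrow> real"
  have tangent_diff: "tangent p q - tangent p0 q0
      = (\<Sum>x\<in>A. a * r x powr (a - 1) * (p x - p0 x) + (1 - a) * r x powr a * (q x - q0 x))"
    unfolding tangent_def sum_subtractf[symmetric] by (intro sum.cong) (simp_all add: algebra_simps)
  have "(\<Sum>x\<in>A. p0 x powr a * q0 x powr (1 - a)) = tangent p0 q0"
    unfolding tangent_def using assms(3-5) by (intro sum.cong) (simp_all add: renyi_summand_on_ray)
  also have "\<dots> \<le> tangent p q"
    using tangent_diff assms(9) by linarith
  also have "\<dots> \<le> (\<Sum>x\<in>A. p x powr a * q x powr (1 - a))"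
    unfolding tangent_def using assms(2,3,6-8) by (intro sum_mono renyi_summand_above_tangent) auto
  finally show ?thesis .
qed

lemma sum_weighted_diff_nonneg:
  fixes u v w :: "'a \<Rightarrow> real"
  assumes "sum u A = sum v A" "\<And>x. x \<in> A \<Longrightarrow> (w x - K) * (u x - v x) \<ge> 0"
  shows "(\<Sum>x\<in>A. w x * (u x - v x)) \<ge> 0"
proof -
  have "(\<Sum>x\<in>A. w x * (u x - v x)) = (\<Sum>x\<in>A. (w x - K) * (u x - v x)) + K * (sum u A - sum v A)"
    by (simp add: algebra_simps sum.distrib sum_subtractf sum_distrib_left)
  then show ?thesis using assms by (simp add: sum_nonneg)
qed

lemma mixture_component_iff:
  assumes "is_dist P" "0 < \<delta>" "\<delta> < 1"
  shows "(\<exists>P''. is_dist P' \<and> is_dist P'' \<and> (\<forall>x. P x = (1 - \<delta>) * P' x + \<delta> * P'' x))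
     \<longleftrightarrow> is_dist P' \<and> (\<forall>x. (1 - \<delta>) * P' x \<le> P x)"
proof
  assume "\<exists>P''. is_dist P' \<and> is_dist P'' \<and> (\<forall>x. P x = (1 - \<delta>) * P' x + \<delta> * P'' x)"
  then show "is_dist P' \<and> (\<forall>x. (1 - \<delta>) * P' x \<le> P x)"
    using assms(2) by (auto simp: is_dist_def)
next
  assume P': "is_dist P' \<and> (\<forall>x. (1 - \<delta>) * P' x \<le> P x)"
  define P'' where "P'' x = (P x - (1 - \<delta>) * P' x) / \<delta>" for x
  have "(\<Sum>x\<in>UNIV. P'' x) = ((\<Sum>x\<in>UNIV. P x) - (1 - \<delta>) * (\<Sum>x\<in>UNIV. P' x)) / \<delta>"
    by (simp add: P''_def sum_divide_distrib[symmetric] sum_subtractf sum_distrib_left)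
  then have "is_dist P''"
    using assms P' by (simp add: is_dist_def P''_def)
  moreover have "P x = (1 - \<delta>) * P' x + \<delta> * P'' x" for x
    using assms(2) by (simp add: P''_def)
  ultimately show "\<exists>P''. is_dist P' \<and> is_dist P'' \<and> (\<forall>x. P x = (1 - \<delta>) * P' x + \<delta> * P'' x)"
    using P' by blast
qed

lemma approx_feasible_iff:
  assumes "is_dist P" "is_dist Q" "0 < \<delta>" "\<delta> < 1"
  shows "approx_feasible \<delta> P Q P' Q' \<longleftrightarrow>
    is_dist P' \<and> is_dist Q' \<and> (\<forall>x. (1 - \<delta>) * P' x \<le> P x) \<and> (\<forall>x. (1 - \<delta>) * Q' x \<le> Q x)"
  using mixture_component_iff[OF assms(1,3,4), of P'] mixture_component_iff[OF assms(2,3,4), of Q']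
  unfolding approx_feasible_def by blast

lemma approx_renyi_div_eqI:
  assumes "approx_feasible \<delta> P Q P0 Q0"
    and "\<And>P' Q'. approx_feasible \<delta> P Q P' Q' \<Longrightarrow> renyi_div \<alpha> P0 Q0 \<le> renyi_div \<alpha> P' Q'"
  shows "approx_renyi_div \<alpha> \<delta> P Q = renyi_div \<alpha> P0 Q0"
  unfolding approx_renyi_div_def
proof (rule antisym)
  show "(INF PQ\<in>{(P', Q'). approx_feasible \<delta> P Q P' Q'}. renyi_div \<alpha> (fst PQ) (snd PQ))
      \<le> renyi_div \<alpha> P0 Q0"
    using assms(1) by (intro INF_lower2[of "(P0, Q0)"]) auto
  show "renyi_div \<alpha> P0 Q0
      \<le> (INF PQ\<in>{(P', Q'). approx_feasible \<delta> P Q P' Q'}. renyi_div \<alpha> (fst PQ) (snd PQ))"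
    using assms(2) by (intro INF_greatest) auto
qed

lemma renyi_sum_pos:
  fixes P Q :: "'a::finite \<Rightarrow> real"
  assumes "is_dist P" "\<And>x. Q x \<ge> 0" "\<And>x. Q x = 0 \<Longrightarrow> P x = 0"
  shows "(\<Sum>x\<in>UNIV. P x powr \<alpha> * Q x powr (1 - \<alpha>)) > 0"
proof -
  obtain y where "P y \<noteq> 0"
    using assms(1) by (force simp: is_dist_def)
  then have "P y > 0" "Q y > 0"
    using assms by (auto simp: is_dist_def order.order_iff_strict)
  then have "0 < P y powr \<alpha> * Q y powr (1 - \<alpha>)"
    by simp
  also have "\<dots> \<le> (\<Sum>x\<in>UNIV. P x powr \<alpha> * Q x powr (1 - \<alpha>))"
    by (intro member_le_sum) auto
  finally show ?thesis .
qed

lemma renyi_div_le_of_sum_le: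
  assumes "\<alpha> > 1" "\<forall>x. Q0 x = 0 \<longrightarrow> P0 x = 0"
    and "(\<Sum>x\<in>UNIV. P0 x powr \<alpha> * Q0 x powr (1 - \<alpha>)) > 0"
    and "(\<forall>x. Q x = 0 \<longrightarrow> P x = 0) \<Longrightarrow>
      (\<Sum>x\<in>UNIV. P0 x powr \<alpha> * Q0 x powr (1 - \<alpha>)) \<le> (\<Sum>x\<in>UNIV. P x powr \<alpha> * Q x powr (1 - \<alpha>))"
  shows "renyi_div \<alpha> P0 Q0 \<le> renyi_div \<alpha> P Q"
  using assms by (auto simp: renyi_div_def divide_right_mono)

locale renyi_truncation =
  fixes P Q :: "'a::finite \<Rightarrow> real" and \<delta> lamP lamQ :: real
  assumes dist_P: "is_dist P" and dist_Q: "is_dist Q"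
    and delta_pos: "0 < \<delta>" and delta_less_1: "\<delta> < 1"
    and overlap_less: "(\<Sum>x\<in>UNIV. min (P x) (Q x)) < 1 - \<delta>"
    and sum_min_lamP: "(\<Sum>x\<in>UNIV. min (P x) (lamP * Q x)) = 1 - \<delta>"
    and sum_min_lamQ: "(\<Sum>x\<in>UNIV. min (Q x) (min (P x) (lamP * Q x) / lamQ)) = 1 - \<delta>"
begin

definition Ptilde :: "'a \<Rightarrow> real" where "Ptilde x = min (P x) (lamP * Q x)"

definition Qtilde :: "'a \<Rightarrow> real" where "Qtilde x = min (Q x) (Ptilde x / lamQ)"

lemma P_nonneg: "P x \<ge> 0" and Q_nonneg: "Q x \<ge> 0"
  using dist_P dist_Q by (auto simp: is_dist_def)

lemma sum_Ptilde: "(\<Sum>x\<in>UNIV. Ptilde x) = 1 - \<delta>"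
  using sum_min_lamP by (simp add: Ptilde_def)

lemma sum_Qtilde: "(\<Sum>x\<in>UNIV. Qtilde x) = 1 - \<delta>"
  using sum_min_lamQ by (simp add: Qtilde_def Ptilde_def)

lemma lamP_ge_1: "lamP \<ge> 1"
proof (rule ccontr)
  assume "\<not> lamP \<ge> 1"
  then have "Ptilde x \<le> min (P x) (Q x)" for x
    using mult_right_mono[of lamP 1 "Q x"] Q_nonneg[of x] by (auto simp: Ptilde_def)
  then have "(\<Sum>x\<in>UNIV. Ptilde x) \<le> (\<Sum>x\<in>UNIV. min (P x) (Q x))"
    by (intro sum_mono)
  then show False
    using sum_Ptilde overlap_less by linarith
qed

lemma Ptilde_nonneg: "Ptilde x \<ge> 0"
  using P_nonneg[of x] Q_nonneg[of x] lamP_ge_1 by (simp add: Ptilde_def)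

lemma lamQ_pos: "lamQ > 0"
proof (rule ccontr)
  assume "\<not> lamQ > 0"
  then have "Qtilde x \<le> 0" for x
    using Ptilde_nonneg[of x] by (auto simp: Qtilde_def min_le_iff_disj divide_nonneg_nonpos)
  then have "(\<Sum>x\<in>UNIV. Qtilde x) \<le> 0"
    by (simp add: sum_nonpos)
  then show False
    using sum_Qtilde delta_less_1 by simp
qed

lemma Qtilde_nonneg: "Qtilde x \<ge> 0"
  using Q_nonneg[of x] Ptilde_nonneg[of x] lamQ_pos by (simp add: Qtilde_def)

lemma lamQ_mult_Qtilde_le: "lamQ * Qtilde x \<le> Ptilde x"
proof -
  have "Qtilde x \<le> Ptilde x / lamQ"
    by (simp add: Qtilde_def)
  then show ?thesis
    using lamQ_pos by (simp add: pos_le_divide_eq mult.commute)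
qed

lemma lamQ_le_1: "lamQ \<le> 1"
proof -
  have "lamQ * (1 - \<delta>) = (\<Sum>x\<in>UNIV. lamQ * Qtilde x)"
    by (simp add: sum_Qtilde sum_distrib_left[symmetric])
  also have "\<dots> \<le> 1 - \<delta>"
    unfolding sum_Ptilde[symmetric] by (intro sum_mono lamQ_mult_Qtilde_le)
  finally show ?thesis
    using delta_less_1 by simp
qed

lemma Qtilde_eq_0_cases:
  assumes "Qtilde x = 0"
  shows "Ptilde x = 0" "Q x = 0 \<or> P x = 0"
proof -
  have "Ptilde x = 0 \<and> (Q x = 0 \<or> P x = 0)"
  proof (cases "Q x = 0")
    case True
    then show ?thesis
      using Ptilde_nonneg[of x] by (simp add: Ptilde_def min_le_iff_disj)
  next
    case False
    then have "Ptilde x / lamQ = 0"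
      using assms Q_nonneg[of x] Ptilde_nonneg[of x] lamQ_pos
      by (auto simp: Qtilde_def min_def split: if_splits)
    then have "Ptilde x = 0"
      using lamQ_pos by simp
    moreover have "lamP * Q x > 0"
      using False Q_nonneg[of x] lamP_ge_1 by simp
    ultimately show ?thesis
      by (auto simp: Ptilde_def min_def split: if_splits)
  qed
  then show "Ptilde x = 0" "Q x = 0 \<or> P x = 0"
    by auto
qed

text \<open>Where Qtilde x = 0 also Ptilde x = 0, so any value in [lamQ, lamP] would serve there.\<close>

definition ratio :: "'a \<Rightarrow> real" where
  "ratio x = (if Qtilde x = 0 then lamQ else Ptilde x / Qtilde x)"

lemma Ptilde_eq_ratio_mult: "Ptilde x = ratio x * Qtilde x"
  using Qtilde_eq_0_cases(1)[of x] by (simp add: ratio_def)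

lemma ratio_eq_lamQ:
  assumes "Qtilde x \<noteq> Q x"
  shows "ratio x = lamQ"
proof -
  have "Qtilde x = Ptilde x / lamQ"
    using assms by (auto simp: Qtilde_def min_def)
  then have "Ptilde x = lamQ * Qtilde x"
    using lamQ_pos by simp
  then show ?thesis
    by (simp add: ratio_def)
qed

lemma ratio_eq_lamP:
  assumes "Ptilde x \<noteq> P x" "Qtilde x \<noteq> 0"
  shows "ratio x = lamP"
proof -
  have Ptilde: "Ptilde x = lamP * Q x"
    using assms(1) by (auto simp: Ptilde_def min_def)
  have "lamQ * Q x \<le> lamP * Q x"
    using lamQ_le_1 lamP_ge_1 Q_nonneg[of x] by (intro mult_right_mono) auto
  then have "Qtilde x = Q x"
    using lamQ_pos by (simp add: Qtilde_def Ptilde pos_le_divide_eq mult.commute)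
  then show ?thesis
    using assms(2) by (simp add: ratio_def Ptilde)
qed

lemma lamQ_le_ratio: "lamQ \<le> ratio x"
  using lamQ_mult_Qtilde_le[of x] Qtilde_nonneg[of x]
  by (simp add: ratio_def pos_le_divide_eq mult.commute)

lemma ratio_pos: "ratio x > 0"
  using lamQ_pos lamQ_le_ratio[of x] by linarith

lemma ratio_le_lamP: "ratio x \<le> lamP"
proof (cases "Qtilde x = Q x \<and> Qtilde x \<noteq> 0")
  case True
  then show ?thesis
    using Ptilde_def[of x] Q_nonneg[of x] by (simp add: ratio_def pos_divide_le_eq)
next
  case False
  then have "ratio x = lamQ"
    by (metis ratio_def ratio_eq_lamQ)
  then show ?thesis
    using lamQ_le_1 lamP_ge_1 by simp
qed

definition Popt :: "'a \<Rightarrow> real" where "Popt x = Ptilde x / (1 - \<delta>)"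

definition Qopt :: "'a \<Rightarrow> real" where "Qopt x = Qtilde x / (1 - \<delta>)"

lemma Popt_eq_ratio_mult: "Popt x = ratio x * Qopt x"
  by (simp add: Popt_def Qopt_def Ptilde_eq_ratio_mult)

lemma is_dist_Popt: "is_dist Popt"
  using Ptilde_nonneg delta_less_1
  by (simp add: is_dist_def Popt_def sum_divide_distrib[symmetric] sum_Ptilde)

lemma is_dist_Qopt: "is_dist Qopt"
  using Qtilde_nonneg delta_less_1
  by (simp add: is_dist_def Qopt_def sum_divide_distrib[symmetric] sum_Qtilde)

lemma approx_feasible_opt: "approx_feasible \<delta> P Q Popt Qopt"
proof -
  have "Ptilde x \<le> P x" "Qtilde x \<le> Q x" for x
    by (simp_all add: Ptilde_def Qtilde_def)
  then show ?thesis
    unfolding approx_feasible_iff[OF dist_P dist_Q delta_pos delta_less_1]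
    using is_dist_Popt is_dist_Qopt delta_less_1 by (simp add: Popt_def Qopt_def)
qed

lemma complementary_slackness_P:
  assumes "a \<ge> 1" "(1 - \<delta>) * p \<le> P x" "Qtilde x = 0 \<Longrightarrow> p = 0"
  shows "(a * ratio x powr (a - 1) - a * lamP powr (a - 1)) * (p - Popt x) \<ge> 0"
proof (cases "ratio x = lamP")
  case False
  have "a * ratio x powr (a - 1) \<le> a * lamP powr (a - 1)"
    using assms(1) ratio_pos[of x] ratio_le_lamP[of x] by (simp add: powr_mono2)
  moreover have "p \<le> Popt x"
  proof (cases "Qtilde x = 0")
    case True
    then show ?thesis
      using assms(3) Qtilde_eq_0_cases(1) by (simp add: Popt_def)
  next
    case nonzero: False
    then have "Ptilde x = P x"
      using False ratio_eq_lamP by blast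
    then show ?thesis
      using assms(2) delta_less_1 by (simp add: Popt_def pos_le_divide_eq mult.commute)
  qed
  ultimately show ?thesis
    by (simp add: mult_nonpos_nonpos)
qed simp

lemma complementary_slackness_Q:
  assumes "a \<ge> 1" "(1 - \<delta>) * q \<le> Q x"
  shows "((1 - a) * ratio x powr a - (1 - a) * lamQ powr a) * (q - Qopt x) \<ge> 0"
proof (cases "ratio x = lamQ")
  case False
  have "lamQ powr a \<le> ratio x powr a"
    using assms(1) lamQ_pos lamQ_le_ratio[of x] by (simp add: powr_mono2)
  then have "(1 - a) * ratio x powr a \<le> (1 - a) * lamQ powr a"
    using assms(1) by (simp add: mult_left_mono_neg)
  moreover have "Qtilde x = Q x"
    using False ratio_eq_lamQ by blast
  then have "q \<le> Qopt x"
    using assms(2) delta_less_1 by (simp add: Qopt_def pos_le_divide_eq mult.commute)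
  ultimately show ?thesis
    by (simp add: mult_nonpos_nonpos)
qed simp

lemma renyi_div_opt_le:
  assumes "\<alpha> > 1" "approx_feasible \<delta> P Q P' Q'"
  shows "renyi_div \<alpha> Popt Qopt \<le> renyi_div \<alpha> P' Q'"
proof (rule renyi_div_le_of_sum_le[OF assms(1)])
  show abs_cont: "\<forall>x. Qopt x = 0 \<longrightarrow> Popt x = 0"
    by (simp add: Popt_eq_ratio_mult)
  show "(\<Sum>x\<in>UNIV. Popt x powr \<alpha> * Qopt x powr (1 - \<alpha>)) > 0"
    using is_dist_Popt is_dist_Qopt abs_cont by (intro renyi_sum_pos) (auto simp: is_dist_def)
  assume abs_cont': "\<forall>x. Q' x = 0 \<longrightarrow> P' x = 0"
  have P': "is_dist P'" "\<And>x. (1 - \<delta>) * P' x \<le> P x"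
    and Q': "is_dist Q'" "\<And>x. (1 - \<delta>) * Q' x \<le> Q x"
    using assms(2) unfolding approx_feasible_iff[OF dist_P dist_Q delta_pos delta_less_1] by auto
  have P'_eq_0: "P' x = 0" if "Qtilde x = 0" for x
  proof -
    have "Q' x = 0 \<or> P x = 0"
      using Qtilde_eq_0_cases(2)[OF that] Q'(2)[of x] Q'(1) delta_less_1
      by (auto simp: is_dist_def mult_le_0_iff order.antisym)
    then show ?thesis
      using abs_cont' P'(2)[of x] P'(1) delta_less_1
      by (auto simp: is_dist_def mult_le_0_iff order.antisym)
  qed
  have "(\<Sum>x\<in>UNIV. \<alpha> * ratio x powr (\<alpha> - 1) * (P' x - Popt x)) \<ge> 0"
    using P' is_dist_Popt P'_eq_0 assms(1)
    by (intro sum_weighted_diff_nonneg[where K = "\<alpha> * lamP powr (\<alpha> - 1)"]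
        complementary_slackness_P) (auto simp: is_dist_def)
  moreover have "(\<Sum>x\<in>UNIV. (1 - \<alpha>) * ratio x powr \<alpha> * (Q' x - Qopt x)) \<ge> 0"
    using Q' is_dist_Qopt assms(1)
    by (intro sum_weighted_diff_nonneg[where K = "(1 - \<alpha>) * lamQ powr \<alpha>"]
        complementary_slackness_Q) (auto simp: is_dist_def)
  ultimately show "(\<Sum>x\<in>UNIV. Popt x powr \<alpha> * Qopt x powr (1 - \<alpha>))
      \<le> (\<Sum>x\<in>UNIV. P' x powr \<alpha> * Q' x powr (1 - \<alpha>))"
    using assms(1) P'(1) Q'(1) abs_cont' is_dist_Qopt
    by (intro renyi_sum_le_of_tangent_certificate[where r = ratio])
      (auto simp: Popt_eq_ratio_mult ratio_pos is_dist_def sum.distrib)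
qed

end

theorem mainTheorem9:
  fixes P Q :: "'a::finite \<Rightarrow> real" and \<delta> lamP lamQ :: real
  assumes "is_dist P" and "is_dist Q"
    and "0 < \<delta>" and "\<delta> < 1"
    and "(\<Sum>x\<in>UNIV. min (P x) (Q x)) < 1 - \<delta>"
    and "(\<Sum>x\<in>UNIV. min (P x) (lamP * Q x)) = 1 - \<delta>"
    and "(\<Sum>x\<in>UNIV. min (Q x) (min (P x) (lamP * Q x) / lamQ)) = 1 - \<delta>"
  shows "lamP \<ge> 1 \<and> 1 \<ge> lamQ \<and>
    (\<forall>\<alpha>>1.
       approx_feasible \<delta> P Q
         (\<lambda>x. min (P x) (lamP * Q x) / (1 - \<delta>))
         (\<lambda>x. min (Q x) (min (P x) (lamP * Q x) / lamQ) / (1 - \<delta>)) \<and>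
       approx_renyi_div \<alpha> \<delta> P Q =
         renyi_div \<alpha> (\<lambda>x. min (P x) (lamP * Q x) / (1 - \<delta>))
                    (\<lambda>x. min (Q x) (min (P x) (lamP * Q x) / lamQ) / (1 - \<delta>)))"
proof -
  interpret renyi_truncation P Q \<delta> lamP lamQ
    by unfold_locales (fact assms)+
  have "(\<lambda>x. min (P x) (lamP * Q x) / (1 - \<delta>)) = Popt"
    and "(\<lambda>x. min (Q x) (min (P x) (lamP * Q x) / lamQ) / (1 - \<delta>)) = Qopt"
    by (simp_all add: fun_eq_iff Popt_def Qopt_def Qtilde_def Ptilde_def)
  then show ?thesis
    using lamP_ge_1 lamQ_le_1 approx_feasible_opt
      approx_renyi_div_eqI[OF approx_feasible_opt renyi_div_opt_le]
    by simp
qed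

end
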